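(* Let $\Gamma\in[0,1]$, $\Lambda>0$, $d_0\in(0,1]$, and let the thresholds be exponentially distributed with parameter $\Lambda$, i.e. $F(x)=1-e^{-\Lambda x}$, so that the hazard function $h_F(x)=f(x)/(1-F(x))$ equals $\Lambda$. Then (1) the HILT fluid-limit equation $\dot b=d$, $\dot d=h_F(\Gamma b)\Gamma d(1-b-d)-d$ becomes $$\dot b=d,\qquad \dot d=\Lambda\Gamma d(1-b-d)-d,$$ and (2) for its solution with $b(0)=0$, $d(0)=d_0$, the limit $b_\infty=\lim_{t\to\infty}b(t)$ exists and satisfies $$b_\infty=1-(1-d_0)e^{-\Lambda\Gamma b_\infty}.$$ *)

theory Defs
  imports Complex_Main
begin

definition expF :: "real \<Rightarrow> real \<Rightarrow> real" where
  "expF Lam x = (if x < 0 then 0 else 1 - exp (- Lam * x))"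

definition expf :: "real \<Rightarrow> real \<Rightarrow> real" where
  "expf Lam x = (if x < 0 then 0 else Lam * exp (- Lam * x))"

definition hazard :: "(real \<Rightarrow> real) \<Rightarrow> (real \<Rightarrow> real) \<Rightarrow> real \<Rightarrow> real" where
  "hazard F f x = f x / (1 - F x)"

end

theory Submission
  imports Defs "HOL-Analysis.Analysis"
begin

(*
  The hazard of the exponential law is the constant Lam on [0,oo) (and lies in [0,Lam]
  everywhere), so the HILT system reduces to  b' = d,  d' = c d (1-b-d) - d  with c = Lam Gam
  as soon as b stays nonnegative.  The proof proceeds in three stages.

  1. Positivity.  The second equation has the linear form  d' = k(t) d  with a coefficient k
     bounded below by a continuous function; such a solution started at d(0) > 0 never
     reaches 0 (at a first zero T, d e^(MT) would be nondecreasing on [0,T]).  Hence d > 0,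
     b is nondecreasing, b >= 0, and the reduced system holds on [0,oo).
  2. First integral.  Along the reduced system  (1-b-d) e^(c b)  is constant, so
     d = 1 - b - (1-d0) e^(-c b); with d > 0 this gives b <= 1.
  3. Final size.  b is monotone and bounded, hence b -> binf, and then d -> L with
     L = 1 - binf - (1-d0) e^(-c binf).  A bounded function cannot have a derivative tending
     to a positive limit, so L <= 0, while d > 0 gives L >= 0.  Thus L = 0.
*)

lemma hazard_expF:
  assumes "Lam > 0" "x \<ge> 0"
  shows "hazard (expF Lam) (expf Lam) x = Lam"
  using assms by (simp add: hazard_def expF_def expf_def)

lemma hazard_expF_bounds:
  assumes "Lam > 0"
  shows "0 \<le> hazard (expF Lam) (expf Lam) x" "hazard (expF Lam) (expf Lam) x \<le> Lam"
  using assms by (cases "x < 0"; simp add: hazard_def expF_def expf_def)+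

text \<open>Consequently the coefficient h(y) Gam x - 1 of the HILT equation, viewed as linear in d,
  is bounded below by the continuous function -(1 + Lam |x|).\<close>
lemma hazard_coefficient_lower_bound:
  assumes "Lam > 0" "0 \<le> Gam" "Gam \<le> 1"
  shows "hazard (expF Lam) (expf Lam) y * Gam * x - 1 \<ge> - (1 + Lam * \<bar>x\<bar>)"
proof -
  define h where "h = hazard (expF Lam) (expf Lam) y"
  have "0 \<le> h" "h \<le> Lam" unfolding h_def using hazard_expF_bounds[OF \<open>Lam > 0\<close>] by auto
  then have hG: "0 \<le> h * Gam" "h * Gam \<le> Lam"
    using assms(2,3) by (auto intro: order_trans[OF mult_left_le])
  have "\<bar>h * Gam * x\<bar> \<le> Lam * \<bar>x\<bar>"
    unfolding abs_mult[of "h * Gam"] abs_of_nonneg[OF hG(1)]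
    by (rule mult_right_mono) (use hG in auto)
  then show ?thesis unfolding h_def[symmetric] using abs_le_D2 by fastforce
qed

lemma nondecreasing_by_derivative:
  fixes f f' :: "real \<Rightarrow> real"
  assumes D: "\<forall>t\<ge>0. (f has_real_derivative f' t) (at t within {0..})"
    and nonneg: "\<And>t. a < t \<Longrightarrow> t < c \<Longrightarrow> f' t \<ge> 0" and "0 \<le> a" "a \<le> c"
  shows "f a \<le> f c"
proof (rule DERIV_nonneg_imp_increasing_open[OF \<open>a \<le> c\<close>])
  fix x assume x: "a < x" "x < c"
  have "(f has_real_derivative f' x) (at x within {0<..})"
    by (rule has_field_derivative_subset[OF D[rule_format]]) (use x \<open>0 \<le> a\<close> in auto)
  moreover have "at x within {0<..} = at x"
    using x \<open>0 \<le> a\<close> by (intro at_within_open) auto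
  ultimately show "\<exists>y. (f has_real_derivative y) (at x) \<and> 0 \<le> y"
    using nonneg x by auto
next
  show "continuous_on {a..c} f" unfolding continuous_on_eq_continuous_within
  proof
    fix x assume "x \<in> {a..c}"
    with \<open>0 \<le> a\<close> have "continuous (at x within {0..}) f"
      by (intro DERIV_continuous[OF D[rule_format]]) auto
    then show "continuous (at x within {a..c}) f"
      by (rule continuous_within_subset) (use \<open>0 \<le> a\<close> in auto)
  qed
qed

lemma continuous_on_by_derivative:
  fixes f f' :: "real \<Rightarrow> real"
  assumes "\<forall>t\<ge>0. (f has_real_derivative f' t) (at t within {0..})"
  shows "continuous_on {0..} f"
  unfolding continuous_on_eq_continuous_within
  using DERIV_continuous[OF assms[rule_format]] by auto

lemma first_nonpositive_time:
  fixes d :: "real \<Rightarrow> real"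
  assumes cont: "continuous_on {0..} d" and "t1 \<ge> 0" "d t1 \<le> 0"
  obtains T where "T \<ge> 0" "d T \<le> 0" "\<And>s. 0 \<le> s \<Longrightarrow> s < T \<Longrightarrow> d s > 0"
proof -
  define S where "S = {0..} \<inter> d -` {..0}"
  have "closed S"
    unfolding S_def using continuous_closed_preimage[OF cont] by auto
  moreover have "S \<noteq> {}" using assms unfolding S_def by auto
  moreover have bdd: "bdd_below S" unfolding S_def by (rule bdd_belowI[of _ 0]) auto
  ultimately have "Inf S \<in> S" by (rule closed_contains_Inf[rotated -1])
  moreover have "d s > 0" if "0 \<le> s" "s < Inf S" for s
    using cInf_lower[OF _ bdd, of s] that unfolding S_def by force
  ultimately show ?thesis using that unfolding S_def by auto
qed

lemma linear_ode_stays_positive: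
  fixes d k g :: "real \<Rightarrow> real"
  assumes D: "\<forall>t\<ge>0. (d has_real_derivative k t * d t) (at t within {0..})"
    and lower: "\<And>t. t \<ge> 0 \<Longrightarrow> k t \<ge> - g t" and cont_g: "continuous_on {0..} g"
    and "d 0 > 0" and "t \<ge> 0"
  shows "d t > 0"
proof (rule ccontr)
  assume "\<not> d t > 0"
  then have "d t \<le> 0" by simp
  then obtain T where T: "T \<ge> 0" "d T \<le> 0" and pos: "\<And>s. 0 \<le> s \<Longrightarrow> s < T \<Longrightarrow> d s > 0"
    using first_nonpositive_time[OF continuous_on_by_derivative[OF D] \<open>t \<ge> 0\<close>] by blast
  have "compact (g ` {0..T})"
    using cont_g by (intro compact_continuous_image) (auto elim: continuous_on_subset)
  then obtain M where "\<forall>y\<in>g ` {0..T}. \<bar>y\<bar> \<le> M"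
    using compact_imp_bounded bounded_real by blast
  then have M: "g s \<le> M" if "s \<in> {0..T}" for s
    using that by (auto dest: abs_le_D1)
  define P where "P s = d s * exp (M * s)" for s
  have DP: "\<forall>s\<ge>0. (P has_real_derivative (k s + M) * d s * exp (M * s)) (at s within {0..})"
  proof (intro allI impI)
    fix s :: real assume "s \<ge> 0"
    note [derivative_intros] = D[rule_format, OF this]
    show "(P has_real_derivative (k s + M) * d s * exp (M * s)) (at s within {0..})"
      unfolding P_def by (auto intro!: derivative_eq_intros simp: algebra_simps)
  qed
  have "P 0 \<le> P T"
  proof (rule nondecreasing_by_derivative[OF DP _ order_refl \<open>T \<ge> 0\<close>])
    fix s assume "0 < s" "s < T"
    then have "k s + M \<ge> 0" using lower[of s] M[of s] by auto
    then show "(k s + M) * d s * exp (M * s) \<ge> 0" using pos[of s] \<open>0 < s\<close> \<open>s < T\<close> by simp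
  qed
  moreover have "P T \<le> 0" unfolding P_def using T by (simp add: mult_nonpos_nonneg)
  ultimately show False using \<open>d 0 > 0\<close> unfolding P_def by simp
qed

lemma nondecreasing_bounded_tendsto:
  fixes b :: "real \<Rightarrow> real"
  assumes mono: "\<And>s t. 0 \<le> s \<Longrightarrow> s \<le> t \<Longrightarrow> b s \<le> b t"
    and bound: "\<And>t. t \<ge> 0 \<Longrightarrow> b t \<le> B"
  shows "(b \<longlongrightarrow> (SUP t\<in>{0..}. b t)) at_top"
proof -
  have bdd: "bdd_above (b ` {0..})" using bound by (intro bdd_aboveI[of _ B]) auto
  show ?thesis
  proof (rule order_tendstoI)
    fix a assume "a < (SUP t\<in>{0..}. b t)"
    then obtain t0 where "t0 \<ge> 0" "a < b t0" using less_cSUP_iff[OF _ bdd, of a] by auto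
    then show "eventually (\<lambda>t. a < b t) at_top"
      unfolding eventually_at_top_linorder using mono
      by (intro exI[of _ t0]) (auto intro: less_le_trans)
  next
    fix a assume "(SUP t\<in>{0..}. b t) < a"
    then show "eventually (\<lambda>t. b t < a) at_top"
      unfolding eventually_at_top_linorder using cSUP_upper[OF _ bdd]
      by (intro exI[of _ 0]) (force intro: le_less_trans)
  qed
qed

text \<open>If a function is bounded on [0,oo), its derivative cannot tend to a positive limit:
  otherwise the function would eventually grow at least linearly.\<close>
lemma derivative_limit_nonpos:
  fixes b d :: "real \<Rightarrow> real"
  assumes D: "\<forall>t\<ge>0. (b has_real_derivative d t) (at t within {0..})"
    and bound: "\<And>t. t \<ge> 0 \<Longrightarrow> \<bar>b t\<bar> \<le> B" and lim: "(d \<longlongrightarrow> L) at_top"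
  shows "L \<le> 0"
proof (rule ccontr)
  assume "\<not> L \<le> 0"
  then have "L > 0" by simp
  then have "eventually (\<lambda>t. L / 2 < d t) at_top" by (intro order_tendstoD(1)[OF lim]) simp
  then obtain t0 where t0: "t0 \<ge> 0" "\<And>t. t \<ge> t0 \<Longrightarrow> L / 2 < d t"
    unfolding eventually_at_top_linorder by (metis max.cobounded2 max.boundedE)
  define t1 where "t1 = t0 + 4 * (B + 1) / L"
  define R where "R t = b t - L / 2 * t" for t
  have DR: "\<forall>t\<ge>0. (R has_real_derivative d t - L / 2) (at t within {0..})"
  proof (intro allI impI)
    fix t :: real assume "t \<ge> 0"
    note [derivative_intros] = D[rule_format, OF this]
    show "(R has_real_derivative d t - L / 2) (at t within {0..})"
      unfolding R_def by (auto intro!: derivative_eq_intros)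
  qed
  have "0 \<le> B" using bound[of 0] by simp
  then have "t0 \<le> t1" using \<open>L > 0\<close> by (simp add: t1_def)
  have "R t0 \<le> R t1"
    by (rule nondecreasing_by_derivative[OF DR _ \<open>t0 \<ge> 0\<close> \<open>t0 \<le> t1\<close>])
       (use t0 in \<open>auto intro: less_imp_le\<close>)
  moreover have "L / 2 * t1 = L / 2 * t0 + 2 * (B + 1)"
    using \<open>L > 0\<close> by (simp add: t1_def field_simps)
  ultimately have "b t0 + 2 * (B + 1) \<le> b t1" unfolding R_def by linarith
  moreover have "\<bar>b t0\<bar> \<le> B" "\<bar>b t1\<bar> \<le> B" using bound t0(1) \<open>t0 \<le> t1\<close> by auto
  ultimately show False by (auto simp: abs_le_iff)
qed

lemma hilt_first_integral:
  fixes b d :: "real \<Rightarrow> real"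
  assumes Db: "\<forall>t\<ge>0. (b has_real_derivative d t) (at t within {0..})"
    and Dd: "\<forall>t\<ge>0. (d has_real_derivative c * d t * (1 - b t - d t) - d t) (at t within {0..})"
    and "t \<ge> 0"
  shows "(1 - b t - d t) * exp (c * b t) = (1 - b 0 - d 0) * exp (c * b 0)"
proof -
  define Q where "Q t = (1 - b t - d t) * exp (c * b t)" for t
  have DQ: "\<forall>t\<ge>0. (Q has_real_derivative 0) (at t within {0..})"
  proof (intro allI impI)
    fix t :: real assume t: "t \<ge> 0"
    note [derivative_intros] = Db[rule_format, OF t] Dd[rule_format, OF t]
    show "(Q has_real_derivative 0) (at t within {0..})"
      unfolding Q_def by (auto intro!: derivative_eq_intros simp: algebra_simps)
  qed
  have "\<forall>t\<ge>0. ((\<lambda>t. - Q t) has_real_derivative 0) (at t within {0..})"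
    using DQ by (auto intro!: derivative_eq_intros)
  from nondecreasing_by_derivative[OF DQ _ order_refl \<open>t \<ge> 0\<close>]
    nondecreasing_by_derivative[OF this _ order_refl \<open>t \<ge> 0\<close>]
  show ?thesis unfolding Q_def by fastforce
qed

lemma hilt_final_size:
  fixes b d :: "real \<Rightarrow> real"
  assumes Db: "\<forall>t\<ge>0. (b has_real_derivative d t) (at t within {0..})"
    and Dd: "\<forall>t\<ge>0. (d has_real_derivative c * d t * (1 - b t - d t) - d t) (at t within {0..})"
    and "b 0 = 0" "d 0 = d0" "d0 \<le> 1" and dpos: "\<And>t. t \<ge> 0 \<Longrightarrow> d t > 0"
  shows "\<exists>binf. (b \<longlongrightarrow> binf) at_top \<and> binf = 1 - (1 - d0) * exp (- c * binf)"
proof -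
  have d_eq: "d t = 1 - b t - (1 - d0) * exp (- c * b t)" if "t \<ge> 0" for t
    using hilt_first_integral[OF Db Dd that] \<open>b 0 = 0\<close> \<open>d 0 = d0\<close>
    by (simp add: exp_minus field_simps)
  have b_mono: "b s \<le> b t" if "0 \<le> s" "s \<le> t" for s t
    by (rule nondecreasing_by_derivative[OF Db _ that]) (use that dpos in \<open>auto intro: less_imp_le\<close>)
  have b_bounds: "0 \<le> b t" "b t \<le> 1" if "t \<ge> 0" for t
  proof -
    show "0 \<le> b t" using b_mono[of 0 t] that \<open>b 0 = 0\<close> by simp
    have "(1 - d0) * exp (- c * b t) \<ge> 0" using \<open>d0 \<le> 1\<close> by simp
    then show "b t \<le> 1" using d_eq[OF that] dpos[OF that] by linarith
  qed
  define binf where "binf = (SUP t\<in>{0..}. b t)"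
  have b_lim: "(b \<longlongrightarrow> binf) at_top"
    unfolding binf_def by (rule nondecreasing_bounded_tendsto[OF b_mono b_bounds(2)])
  define L where "L = 1 - binf - (1 - d0) * exp (- c * binf)"
  have "((\<lambda>t. 1 - b t - (1 - d0) * exp (- c * b t)) \<longlongrightarrow> L) at_top"
    unfolding L_def by (intro tendsto_intros b_lim)
  then have d_lim: "(d \<longlongrightarrow> L) at_top"
    by (rule Lim_transform_eventually)
       (auto simp: eventually_at_top_linorder d_eq intro!: exI[of _ 0])
  have "L \<le> 0"
    by (rule derivative_limit_nonpos[OF Db _ d_lim, of 1]) (use b_bounds in auto)
  moreover have "L \<ge> 0"
    by (rule tendsto_lowerbound[OF d_lim])
       (auto simp: eventually_at_top_linorder intro!: exI[of _ 0] less_imp_le dpos)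
  ultimately show ?thesis using b_lim unfolding L_def by (intro exI[of _ binf]) simp
qed

theorem theorem3:
  fixes Gam Lam d0 :: real and b d :: "real \<Rightarrow> real"
  assumes "0 \<le> Gam" "Gam \<le> 1" "Lam > 0" "0 < d0" "d0 \<le> 1"
    and "b 0 = 0" "d 0 = d0"
    and "\<forall>t\<ge>0. (b has_real_derivative d t) (at t within {0..})"
    and "\<forall>t\<ge>0. (d has_real_derivative
            hazard (expF Lam) (expf Lam) (Gam * b t) * Gam * d t * (1 - b t - d t) - d t)
            (at t within {0..})"
  shows "(\<forall>x\<ge>0. hazard (expF Lam) (expf Lam) x = Lam)
    \<and> (\<forall>t\<ge>0. (d has_real_derivative Lam * Gam * d t * (1 - b t - d t) - d t) (at t within {0..}))
    \<and> (\<exists>binf. (b \<longlongrightarrow> binf) at_top \<and> binf = 1 - (1 - d0) * exp (- Lam * Gam * binf))"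
proof -
  note Db = assms(8) and Dd = assms(9)
  define H where "H t = hazard (expF Lam) (expf Lam) (Gam * b t)" for t
  text \<open>Stage 1: the second equation is linear in d, with coefficient bounded below.\<close>
  have "d t > 0" if "t \<ge> 0" for t
  proof (rule linear_ode_stays_positive[OF _ _ _ _ that])
    show "\<forall>t\<ge>0. (d has_real_derivative (H t * Gam * (1 - b t - d t) - 1) * d t) (at t within {0..})"
      using Dd unfolding H_def by (simp add: algebra_simps)
    show "H t * Gam * (1 - b t - d t) - 1 \<ge> - (1 + Lam * \<bar>1 - b t - d t\<bar>)" for t
      unfolding H_def using hazard_coefficient_lower_bound assms(1-3) by blast
    show "continuous_on {0..} (\<lambda>t. 1 + Lam * \<bar>1 - b t - d t\<bar>)"
      using continuous_on_by_derivative[OF Db] continuous_on_by_derivative[OF Dd]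
      by (intro continuous_intros)
  qed (use assms(4,7) in simp)
  note dpos = this
  text \<open>Hence b is nondecreasing from b(0) = 0, so the hazard along the trajectory is Lam.\<close>
  have "H t = Lam" if "t \<ge> 0" for t
  proof -
    have "b 0 \<le> b t"
      by (rule nondecreasing_by_derivative[OF Db _ order_refl that])
         (use dpos in \<open>auto intro: less_imp_le\<close>)
    then show ?thesis
      unfolding H_def using \<open>b 0 = 0\<close> assms(1) by (intro hazard_expF \<open>Lam > 0\<close>) simp
  qed
  then have reduced: "\<forall>t\<ge>0. (d has_real_derivative Lam * Gam * d t * (1 - b t - d t) - d t)
      (at t within {0..})"
    using Dd unfolding H_def by simp
  show ?thesis
    using hazard_expF[OF \<open>Lam > 0\<close>] reduced
      hilt_final_size[OF Db reduced \<open>b 0 = 0\<close> \<open>d 0 = d0\<close> \<open>d0 \<le> 1\<close> dpos] by simp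
qed

end
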